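(* Let $q$ be a prime power and $n=q^4-1$. There is no symmetric cyclotomic coset of cardinality $2$; that is, there is no $x\in\{0,\ldots,n-1\}$ with $\#I_x=2$ and $I_{n-qx}=I_x$.
   Context: Identify $\mathbb{Z}_n$ with $\{0,\ldots,n-1\}$, all arithmetic modulo $n$. The cyclotomic coset of $x$ with respect to $q^2$ is $I_x=\{x,\,q^2x\bmod n\}$. The (Hermitian) reciprocal coset of $I_x$ is $I_{n-qx}$; $I_x$ is symmetric if $I_{n-qx}=I_x$. *)

theory Defs
  imports "HOL-Computational_Algebra.Primes"
begin

definition prime_power :: "nat \<Rightarrow> bool" where
  "prime_power q \<longleftrightarrow> (\<exists>p k. prime p \<and> k \<ge> 1 \<and> q = p ^ k)"

definition cyc_coset :: "nat \<Rightarrow> nat \<Rightarrow> nat \<Rightarrow> nat set" where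
  "cyc_coset n q x = {x mod n, (q^2 * x) mod n}"

definition recip_index :: "nat \<Rightarrow> nat \<Rightarrow> nat \<Rightarrow> nat" where
  "recip_index n q x = (n - (q * x) mod n) mod n"

end

theory Submission
  imports Defs "HOL-Number_Theory.Cong"
begin

text \<open>
  The reciprocal index y of x satisfies y + q x = 0 (mod n). If I_x is symmetric,
  then y = x or y = q^2 x (mod n); in the second case q is cancelled (it is a unit
  modulo n = q^4 - 1), so in both cases x + q x = 0. Multiplying by q gives
  q^2 x + q x = 0 as well, hence q^2 x = x and I_x = {x} has only one element.
\<close>

lemma coprime_pow_minus_one:
  fixes q k :: nat
  assumes "q > 0" and "k > 0"
  shows "coprime q (q ^ k - 1)"
proof -
  have "coprime (q ^ k - 1 + 1) (q ^ k - 1)"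
    by simp
  then have "coprime (q ^ k) (q ^ k - 1)"
    using \<open>q > 0\<close> by simp
  then show ?thesis
    using \<open>k > 0\<close> by simp
qed

lemma recip_index_add_cong:
  fixes n q x :: nat
  assumes "n > 0"
  shows "[recip_index n q x + q * x = 0] (mod n)"
proof -
  have "(q * x) mod n \<le> n"
    using \<open>n > 0\<close> by (simp add: less_imp_le)
  then have "[recip_index n q x + (q * x) mod n = n] (mod n)"
    unfolding recip_index_def cong_def by (simp add: mod_add_left_eq)
  then show ?thesis
    by (simp add: cong_def mod_add_right_eq)
qed

lemma card_cyc_coset_eq_2_iff:
  fixes n q x :: nat
  assumes "x < n"
  shows "card (cyc_coset n q x) = 2 \<longleftrightarrow> \<not> [q\<^sup>2 * x = x] (mod n)"
  using assms by (auto simp: cyc_coset_def cong_def card_insert_if)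

lemma symmetric_cyc_coset_fixed:
  fixes n q x :: nat
  assumes "coprime q n" and "x < n"
    and symmetric: "cyc_coset n q (recip_index n q x) = cyc_coset n q x"
  shows "[q\<^sup>2 * x = x] (mod n)"
proof -
  define y where "y = recip_index n q x"
  have y_cong: "[y + q * x = 0] (mod n)"
    unfolding y_def using \<open>x < n\<close> by (simp add: recip_index_add_cong)
  have "y \<in> cyc_coset n q y"
    using \<open>x < n\<close> by (simp add: cyc_coset_def y_def recip_index_def)
  then have "y = x \<or> y = (q\<^sup>2 * x) mod n"
    using symmetric \<open>x < n\<close> by (auto simp: cyc_coset_def y_def)
  then have anti: "[x + q * x = 0] (mod n)"
  proof
    assume "y = x"
    then show ?thesis using y_cong by simp
  next
    assume "y = (q\<^sup>2 * x) mod n"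
    then have "[q * (q * x + x) = q * 0] (mod n)"
      using y_cong by (simp add: cong_def mod_add_right_eq power2_eq_square algebra_simps)
    then have "[q * x + x = 0] (mod n)"
      using \<open>coprime q n\<close> cong_mult_lcancel_nat by blast
    then show ?thesis by (simp add: add.commute)
  qed
  then have "[q * (x + q * x) = q * 0] (mod n)"
    by (rule cong_scalar_left)
  then have "[q\<^sup>2 * x + q * x = 0] (mod n)"
    by (simp add: power2_eq_square algebra_simps)
  then have "[q\<^sup>2 * x + q * x = x + q * x] (mod n)"
    using anti by (metis cong_sym cong_trans)
  then show ?thesis
    using cong_add_rcancel_nat by blast
qed

theorem mainTheorem9:
  fixes q n :: nat
  assumes "prime_power q"
    and "n = q ^ 4 - 1"
  shows "\<not> (\<exists>x < n. card (cyc_coset n q x) = 2 \<and>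
                 cyc_coset n q (recip_index n q x) = cyc_coset n q x)"
proof -
  have "q > 0"
    using \<open>prime_power q\<close> unfolding prime_power_def by (auto intro: prime_gt_0_nat)
  then have "coprime q n"
    using \<open>n = q ^ 4 - 1\<close> coprime_pow_minus_one[of q 4] by simp
  then show ?thesis
    using symmetric_cyc_coset_fixed card_cyc_coset_eq_2_iff by blast
qed

end
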